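(* Let $k$ be a domain, $R = k[X_0,\dots,X_m]/J$ a graded domain with $m\ge 1$, $X_0,\dots,X_m$ variables of positive integer weights $A_0,\dots,A_m$ and $J$ a homogeneous ideal, let $A=\operatorname{lcm}(A_0,\dots,A_m)$, $I=R_{\ge mA}$, and let $a_0,\dots,a_m$ be the positive integers with $a_iA_i=A$. Let $p\ge 2$ be an integer and assume $I^{p-1}=R_{\ge (p-1)mA}$. Let $c_0,\dots,c_m$ be nonnegative integers with $c_0A_0+\dots+c_mA_m\ge pmA$ (so the monomial $X_0^{c_0}\cdots X_m^{c_m}$ lies in $R_{\ge pmA}$). Fix $n$ with $1\le n\le m$ and suppose $a_i\le c_i$ for all $0\le i<n$; for each such $i$ let $k_i$ be the unique positive integer with $k_ia_i\le c_i<(k_i+1)a_i$. Then: (1) if $k_0+\dots+k_{n-1}\le m-1$, then $a_j\le c_j$ for some $j$ with $n\le j\le m$; (2) if $k_0+\dots+k_{n-1}\ge m$, then $X_0^{c_0}\cdots X_m^{c_m}\in I^p$.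
   Context: $R$ is $\mathbb N$-graded via $\deg X_i=A_i$, and $X_i$ also denotes its image in $R$. For a nonnegative integer $\alpha$, $R_{\ge\alpha}$ denotes the ideal of $R$ generated by all homogeneous elements of degree at least $\alpha$. *)

theory Defs
  imports "HOL-Library.Poly_Mapping"
begin

text \<open>Polynomials over a coefficient ring k in the variables X_0, X_1, ... are
  represented as finitely supported maps from monomials (exponent vectors) to coefficients.\<close>
type_synonym 'k mpoly = "(nat \<Rightarrow>\<^sub>0 nat) \<Rightarrow>\<^sub>0 'k"

definition polys_in :: "nat \<Rightarrow> 'k::comm_ring_1 mpoly set" where
  "polys_in m = {f. \<forall>\<mu>\<in>Poly_Mapping.keys f. Poly_Mapping.keys \<mu> \<subseteq> {..m}}"

definition Var :: "nat \<Rightarrow> 'k::comm_ring_1 mpoly" where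
  "Var i = Poly_Mapping.single (Poly_Mapping.single i 1) 1"

definition wdeg :: "(nat \<Rightarrow> nat) \<Rightarrow> (nat \<Rightarrow>\<^sub>0 nat) \<Rightarrow> nat" where
  "wdeg A \<mu> = (\<Sum>i\<in>Poly_Mapping.keys \<mu>. Poly_Mapping.lookup \<mu> i * A i)"

definition homog :: "(nat \<Rightarrow> nat) \<Rightarrow> nat \<Rightarrow> 'k::comm_ring_1 mpoly \<Rightarrow> bool" where
  "homog A d f \<longleftrightarrow> (\<forall>\<mu>\<in>Poly_Mapping.keys f. wdeg A \<mu> = d)"

definition hcomp :: "(nat \<Rightarrow> nat) \<Rightarrow> nat \<Rightarrow> 'k::comm_ring_1 mpoly \<Rightarrow> 'k mpoly" where
  "hcomp A d f = Poly_Mapping.mapp (\<lambda>\<mu> c. if wdeg A \<mu> = d then c else 0) f"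

definition is_ideal :: "'a::comm_ring_1 set \<Rightarrow> bool" where
  "is_ideal I \<longleftrightarrow> 0 \<in> I \<and> (\<forall>x\<in>I. \<forall>y\<in>I. x + y \<in> I) \<and> (\<forall>r. \<forall>x\<in>I. r * x \<in> I)"

definition gen_ideal :: "'a::comm_ring_1 set \<Rightarrow> 'a set" where
  "gen_ideal S = \<Inter>{I. is_ideal I \<and> S \<subseteq> I}"

definition ideal_mult :: "'a::comm_ring_1 set \<Rightarrow> 'a set \<Rightarrow> 'a set" where
  "ideal_mult I J = gen_ideal {x * y | x y. x \<in> I \<and> y \<in> J}"

fun ideal_pow :: "'a::comm_ring_1 set \<Rightarrow> nat \<Rightarrow> 'a set" where
  "ideal_pow I 0 = UNIV"
| "ideal_pow I (Suc n) = ideal_mult I (ideal_pow I n)"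

text \<open>R is presented as k[X_0,...,X_m]/J via a surjective ring homomorphism
  \<pi> from k[X_0,...,X_m] onto R whose kernel J is a homogeneous ideal.\<close>
definition graded_presentation ::
  "nat \<Rightarrow> (nat \<Rightarrow> nat) \<Rightarrow> ('k::comm_ring_1 mpoly \<Rightarrow> 'r::comm_ring_1) \<Rightarrow> bool" where
  "graded_presentation m A \<pi> \<longleftrightarrow>
     \<pi> 1 = 1 \<and>
     (\<forall>f\<in>polys_in m. \<forall>g\<in>polys_in m. \<pi> (f + g) = \<pi> f + \<pi> g \<and> \<pi> (f * g) = \<pi> f * \<pi> g) \<and>
     \<pi> ` polys_in m = UNIV \<and>
     (\<forall>f\<in>polys_in m. \<pi> f = 0 \<longrightarrow> (\<forall>d. \<pi> (hcomp A d f) = 0))"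

definition R_ge :: "nat \<Rightarrow> (nat \<Rightarrow> nat) \<Rightarrow> ('k::comm_ring_1 mpoly \<Rightarrow> 'r::comm_ring_1) \<Rightarrow> nat \<Rightarrow> 'r set" where
  "R_ge m A \<pi> \<alpha> = gen_ideal {\<pi> f | f d. f \<in> polys_in m \<and> homog A d f \<and> \<alpha> \<le> d}"

end

theory Submission
  imports Defs
begin

text \<open>Put L = lcm(A_0, ..., A_m), so that a_i A_i = L. If c_j < a_j for every j \<ge> n, then
  X_i^(c_i) has degree below (k_i + 1) L for i < n and below L for i \<ge> n, so the monomial has
  degree below (m + 1 + \<Sum>k_i) L; when \<Sum>k_i \<le> m - 1 this is at most 2 m L \<le> p m L,
  a contradiction. If \<Sum>k_i \<ge> m, choose e_i \<le> k_i with \<Sum>e_i = m: the factor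
  \<Prod>(i<n) X_i^(e_i a_i) divides the monomial and has degree exactly m L, so it lies in I, while
  the cofactor has degree \<ge> (p - 1) m L and hence lies in R_(\<ge> (p-1) m L) = I^(p-1).\<close>

definition Xpow :: "(nat \<Rightarrow> nat) \<Rightarrow> nat set \<Rightarrow> 'k::comm_ring_1 mpoly" where
  "Xpow b S = Poly_Mapping.single (\<Sum>i\<in>S. Poly_Mapping.single i (b i)) 1"

lemma lookup_sum_single:
  assumes "finite S"
  shows "Poly_Mapping.lookup (\<Sum>i\<in>S. Poly_Mapping.single i (b i)) j = (if j \<in> S then b j else 0)"
  using assms by (simp add: lookup_sum lookup_single when_def if_distrib sum.If_cases cong: if_cong)

lemma keys_sum_single_subset:
  assumes "finite S"
  shows "Poly_Mapping.keys (\<Sum>i\<in>S. Poly_Mapping.single i (b i)) \<subseteq> S"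
  using lookup_sum_single[OF assms, of b] by (auto simp: in_keys_iff split: if_splits)

lemma wdeg_sum_single:
  assumes "finite S"
  shows "wdeg A (\<Sum>i\<in>S. Poly_Mapping.single i (b i)) = (\<Sum>i\<in>S. b i * A i)"
proof -
  let ?\<mu> = "\<Sum>i\<in>S. Poly_Mapping.single i (b i)"
  have "wdeg A ?\<mu> = (\<Sum>i\<in>S. Poly_Mapping.lookup ?\<mu> i * A i)"
    unfolding wdeg_def
    by (rule sum.mono_neutral_left) (use assms keys_sum_single_subset[OF assms] in \<open>auto simp: in_keys_iff\<close>)
  also have "\<dots> = (\<Sum>i\<in>S. b i * A i)"
    using lookup_sum_single[OF assms, of b] by simp
  finally show ?thesis .
qed

lemma Xpow_in_polys_in:
  assumes "S \<subseteq> {..m}"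
  shows "Xpow b S \<in> polys_in m"
  using keys_sum_single_subset[of S b] assms finite_subset[OF assms]
  unfolding polys_in_def Xpow_def by auto

lemma homog_Xpow:
  assumes "finite S"
  shows "homog A (\<Sum>i\<in>S. b i * A i) (Xpow b S)"
  using wdeg_sum_single[OF assms] unfolding homog_def Xpow_def by simp

lemma graded_presentation_mult:
  assumes "graded_presentation m A \<pi>" and "f \<in> polys_in m" and "g \<in> polys_in m"
  shows "\<pi> (f * g) = \<pi> f * \<pi> g"
  using assms unfolding graded_presentation_def by blast

lemma graded_presentation_Var_power:
  fixes \<pi> :: "'k::comm_ring_1 mpoly \<Rightarrow> 'r::comm_ring_1"
  assumes pres: "graded_presentation m A \<pi>" and "i \<le> m"
  shows "\<pi> (Poly_Mapping.single (Poly_Mapping.single i k) 1) = \<pi> (Var i) ^ k"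
proof (induction k)
  case 0
  then show ?case
    using pres by (simp add: graded_presentation_def one_poly_mapping.abs_eq[symmetric] single_zero)
next
  case (Suc k)
  have "(Var i :: 'k mpoly) \<in> polys_in m" "Poly_Mapping.single (Poly_Mapping.single i k) (1::'k) \<in> polys_in m"
    using \<open>i \<le> m\<close> by (simp_all add: Var_def polys_in_def)
  moreover have "Poly_Mapping.single (Poly_Mapping.single i (Suc k)) (1::'k)
     = Var i * Poly_Mapping.single (Poly_Mapping.single i k) 1"
    by (simp add: Var_def mult_single single_add[symmetric])
  ultimately show ?case
    using Suc by (simp add: graded_presentation_mult[OF pres])
qed

lemma graded_presentation_Xpow:
  fixes \<pi> :: "'k::comm_ring_1 mpoly \<Rightarrow> 'r::comm_ring_1"
  assumes pres: "graded_presentation m A \<pi>" and "S \<subseteq> {..m}"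
  shows "\<pi> (Xpow b S) = (\<Prod>i\<in>S. \<pi> (Var i) ^ b i)"
proof -
  have "finite S" using assms(2) finite_subset by blast
  then show ?thesis using assms(2)
  proof (induction S rule: finite_induct)
    case empty
    then show ?case using pres by (simp add: Xpow_def graded_presentation_def)
  next
    case (insert i S)
    have "Xpow b (insert i S) = Poly_Mapping.single (Poly_Mapping.single i (b i)) 1 * (Xpow b S :: 'k mpoly)"
      using insert by (simp add: Xpow_def mult_single)
    moreover have "Poly_Mapping.single (Poly_Mapping.single i (b i)) (1::'k) \<in> polys_in m"
      using insert by (simp add: polys_in_def)
    moreover have "(Xpow b S :: 'k mpoly) \<in> polys_in m"
      using insert Xpow_in_polys_in by auto
    ultimately show ?case
      using insert graded_presentation_Var_power[OF pres, of i "b i"]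
      by (simp add: graded_presentation_mult[OF pres])
  qed
qed

lemma gen_ideal_superset: "S \<subseteq> gen_ideal S"
  unfolding gen_ideal_def by auto

lemma mult_mem_ideal_mult: "x \<in> I \<Longrightarrow> y \<in> J \<Longrightarrow> x * y \<in> ideal_mult I J"
  unfolding ideal_mult_def by (rule subsetD[OF gen_ideal_superset]) blast

lemma monomial_mem_R_ge:
  assumes pres: "graded_presentation m A \<pi>" and "\<alpha> \<le> (\<Sum>i\<le>m. b i * A i)"
  shows "(\<Prod>i\<le>m. \<pi> (Var i) ^ b i) \<in> R_ge m A \<pi> \<alpha>"
proof -
  have "Xpow b {..m} \<in> polys_in m" "homog A (\<Sum>i\<le>m. b i * A i) (Xpow b {..m})"
    by (simp_all add: Xpow_in_polys_in homog_Xpow)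
  then show ?thesis
    unfolding graded_presentation_Xpow[OF pres order_refl, symmetric] R_ge_def
    using assms(2) by (intro subsetD[OF gen_ideal_superset]) blast
qed

lemma monomial_mem_ideal_mult_R_ge:
  assumes pres: "graded_presentation m A \<pi>"
    and bc: "\<forall>i\<le>m. b i \<le> c i"
    and \<alpha>: "\<alpha> \<le> (\<Sum>i\<le>m. b i * A i)"
    and \<beta>: "(\<Sum>i\<le>m. b i * A i) + \<beta> \<le> (\<Sum>i\<le>m. c i * A i)"
  shows "(\<Prod>i\<le>m. \<pi> (Var i) ^ c i) \<in> ideal_mult (R_ge m A \<pi> \<alpha>) (R_ge m A \<pi> \<beta>)"
proof -
  have deg: "(\<Sum>i\<le>m. b i * A i) + (\<Sum>i\<le>m. (c i - b i) * A i) = (\<Sum>i\<le>m. c i * A i)"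
    using bc by (simp add: sum.distrib[symmetric] add_mult_distrib[symmetric])
  have "(\<Prod>i\<le>m. \<pi> (Var i) ^ c i) = (\<Prod>i\<le>m. \<pi> (Var i) ^ b i * \<pi> (Var i) ^ (c i - b i))"
    using bc by (intro prod.cong) (simp_all add: power_add[symmetric])
  also have "\<dots> = (\<Prod>i\<le>m. \<pi> (Var i) ^ b i) * (\<Prod>i\<le>m. \<pi> (Var i) ^ (c i - b i))"
    by (rule prod.distrib)
  finally show ?thesis
    using monomial_mem_R_ge[OF pres \<alpha>] monomial_mem_R_ge[OF pres, of \<beta> "\<lambda>i. c i - b i"] \<beta> deg
    by (simp add: mult_mem_ideal_mult)
qed

lemma obtain_bounded_summands:
  fixes f :: "nat \<Rightarrow> nat"
  assumes "d \<le> (\<Sum>i<n. f i)"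
  obtains e where "\<forall>i. e i \<le> f i" "(\<Sum>i<n. e i) = d"
proof -
  have "\<exists>e. (\<forall>i. e i \<le> f i) \<and> (\<Sum>i<n. e i) = d"
    using assms
  proof (induction n arbitrary: d)
    case 0
    then show ?case by (intro exI[of _ "\<lambda>_. 0"]) simp
  next
    case (Suc n)
    let ?t = "min d (f n)"
    have "d - ?t \<le> (\<Sum>i<n. f i)"
      using Suc.prems by auto
    then obtain e where e: "\<forall>i. e i \<le> f i" "(\<Sum>i<n. e i) = d - ?t"
      using Suc.IH by blast
    have "(\<Sum>i<n. (e(n := ?t)) i) = (\<Sum>i<n. e i)" by (rule sum.cong) auto
    then show ?case using e by (intro exI[of _ "e(n := ?t)"]) auto
  qed
  then show thesis using that by blast
qed

lemma sum_atMost_if_less: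
  assumes "n \<le> Suc m"
  shows "(\<Sum>i\<le>m. if i < n then f i else 0) = (\<Sum>i<n. f i)"
  using assms by (intro sum.mono_neutral_cong_right) auto

lemma weighted_degree_less_of_exponent_bounds:
  fixes A c kk :: "nat \<Rightarrow> nat"
  assumes Apos: "\<forall>i\<le>m. 0 < A i" and dvd: "\<forall>i\<le>m. A i dvd L" and "n \<le> m"
    and lower: "\<forall>i<n. c i < (kk i + 1) * (L div A i)"
    and upper: "\<forall>j. n \<le> j \<and> j \<le> m \<longrightarrow> c j < L div A j"
  shows "(\<Sum>i\<le>m. c i * A i) < (m + 1 + (\<Sum>i<n. kk i)) * L"
proof -
  define g where "g i = (if i < n then (kk i + 1) * L else L)" for i
  have "c i * A i < g i" if "i \<le> m" for i
  proof -
    have "c i * A i < (if i < n then kk i + 1 else 1) * (L div A i) * A i"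
      using lower upper Apos that by (intro mult_less_mono1) auto
    also have "\<dots> = g i"
      using dvd that by (simp add: g_def mult.assoc)
    finally show ?thesis .
  qed
  then have "(\<Sum>i\<le>m. c i * A i) < (\<Sum>i\<le>m. g i)"
    by (intro sum_strict_mono) auto
  also have "\<dots> = (\<Sum>i\<le>m. L + (if i < n then kk i * L else 0))"
    by (rule sum.cong) (auto simp: g_def)
  also have "\<dots> = (m + 1 + (\<Sum>i<n. kk i)) * L"
    using \<open>n \<le> m\<close>
    by (simp add: sum.distrib sum_atMost_if_less sum_distrib_right[symmetric] add_mult_distrib)
  finally show ?thesis .
qed

lemma obtain_exponent_of_degree:
  fixes A c kk :: "nat \<Rightarrow> nat"
  assumes dvd: "\<forall>i\<le>m. A i dvd L" and "n \<le> m"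
    and kk: "\<forall>i<n. kk i * (L div A i) \<le> c i"
    and d: "d \<le> (\<Sum>i<n. kk i)"
  obtains b where "\<forall>i\<le>m. b i \<le> c i" "(\<Sum>i\<le>m. b i * A i) = d * L"
proof -
  obtain e where e: "\<forall>i. e i \<le> kk i" "(\<Sum>i<n. e i) = d"
    using obtain_bounded_summands[OF d] by blast
  define b where "b i = (if i < n then e i * (L div A i) else 0)" for i
  have "b i \<le> c i" for i
    using e(1) kk by (auto simp: b_def intro: order_trans[OF mult_le_mono1])
  moreover have "(\<Sum>i\<le>m. b i * A i) = d * L"
  proof -
    have "(\<Sum>i\<le>m. b i * A i) = (\<Sum>i\<le>m. if i < n then e i * L else 0)"
      using dvd \<open>n \<le> m\<close> by (intro sum.cong) (auto simp: b_def mult.assoc)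
    also have "\<dots> = d * L"
      using \<open>n \<le> m\<close> e(2) by (simp add: sum_atMost_if_less sum_distrib_right[symmetric])
    finally show ?thesis .
  qed
  ultimately show ?thesis using that by blast
qed

theorem mainTheorem3:
  fixes \<pi> :: "'k::idom mpoly \<Rightarrow> 'r::idom"
    and m p n :: nat
    and A c kk :: "nat \<Rightarrow> nat"
  assumes pres: "graded_presentation m A \<pi>"
    and m1: "1 \<le> m"
    and Apos: "\<forall>i\<le>m. 0 < A i"
    and p2: "2 \<le> p"
    and Ipow: "ideal_pow (R_ge m A \<pi> (m * Lcm (A ` {..m}))) (p - 1)
               = R_ge m A \<pi> ((p - 1) * m * Lcm (A ` {..m}))"
    and cdeg: "(\<Sum>i\<le>m. c i * A i) \<ge> p * m * Lcm (A ` {..m})"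
    and n: "1 \<le> n" "n \<le> m"
    and ac: "\<forall>i<n. Lcm (A ` {..m}) div A i \<le> c i"
    and kk: "\<forall>i<n. 0 < kk i \<and> kk i * (Lcm (A ` {..m}) div A i) \<le> c i
                   \<and> c i < (kk i + 1) * (Lcm (A ` {..m}) div A i)"
  shows "((\<Sum>i<n. kk i) \<le> m - 1 \<longrightarrow>
            (\<exists>j. n \<le> j \<and> j \<le> m \<and> Lcm (A ` {..m}) div A j \<le> c j))
       \<and> ((\<Sum>i<n. kk i) \<ge> m \<longrightarrow>
            (\<Prod>i\<le>m. \<pi> (Var i) ^ c i) \<in> ideal_pow (R_ge m A \<pi> (m * Lcm (A ` {..m}))) p)"
proof (intro conjI impI)
  define L where "L = Lcm (A ` {..m})"
  have dvd: "\<forall>i\<le>m. A i dvd L"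
    unfolding L_def by (auto intro: dvd_Lcm)
  have kk_lower: "\<forall>i<n. kk i * (L div A i) \<le> c i"
    and kk_upper: "\<forall>i<n. c i < (kk i + 1) * (L div A i)"
    using kk unfolding L_def by auto
  show "\<exists>j. n \<le> j \<and> j \<le> m \<and> L div A j \<le> c j" if few: "(\<Sum>i<n. kk i) \<le> m - 1"
  proof (rule ccontr)
    assume "\<not> ?thesis"
    then have "\<forall>j. n \<le> j \<and> j \<le> m \<longrightarrow> c j < L div A j"
      by auto
    then have "(\<Sum>i\<le>m. c i * A i) < (m + 1 + (\<Sum>i<n. kk i)) * L"
      using weighted_degree_less_of_exponent_bounds[OF Apos dvd \<open>n \<le> m\<close> kk_upper] by blast
    also have "\<dots> \<le> p * m * L"
      using few m1 p2 mult_le_mono1[of 2 p m] by (intro mult_le_mono1) linarith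
    finally show False using cdeg unfolding L_def by simp
  qed
  show "(\<Prod>i\<le>m. \<pi> (Var i) ^ c i) \<in> ideal_pow (R_ge m A \<pi> (m * L)) p"
    if many: "m \<le> (\<Sum>i<n. kk i)"
  proof -
    obtain b where "\<forall>i\<le>m. b i \<le> c i" "(\<Sum>i\<le>m. b i * A i) = m * L"
      using obtain_exponent_of_degree[OF dvd \<open>n \<le> m\<close> kk_lower many] by blast
    moreover have "m * L + (p - 1) * m * L = p * m * L"
      using p2 by (cases p) (auto simp: add_mult_distrib)
    moreover have "ideal_pow (R_ge m A \<pi> (m * L)) p
        = ideal_mult (R_ge m A \<pi> (m * L)) (R_ge m A \<pi> ((p - 1) * m * L))"
      using p2 Ipow unfolding L_def by (cases p) auto
    ultimately show ?thesis
      using monomial_mem_ideal_mult_R_ge[OF pres] cdeg unfolding L_def by simp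
  qed
qed

end
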